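(* Let $p\geq1$, $\mu>0$, and let $g:\mathbb{R}^n\to\mathbb{R}\cup\{+\infty\}$ be convex. Let $\lambda^{\ast}$ be the optimal solution of $$\min_{\lambda\in\mathbb{R}^n}\Big\{g(\lambda)+\frac{\mu}{1+\frac1p}\lVert\lambda\rVert^{1+\frac1p}\Big\},$$ and suppose $\lambda^{\ast}=0$. Let $\lambda^k\in\mathbb{R}^n$ with $\lVert\lambda^k\rVert>0$, set $t^k=\lVert\lambda^k\rVert^{\frac1p-1}$, and let $$\lambda^{k+1}=\arg\min_{\lambda\in\mathbb{R}^n}\Big\{g(\lambda)+\frac{\mu}{2}t^k\lVert\lambda\rVert^2\Big\}.$$ Then $\lambda^{k+1}=\lambda^{\ast}$ (i.e. $\lambda^{k+1}=0$).
   Context: $\lVert\cdot\rVert$ is the Euclidean norm. The minimizers above are assumed to exist. This is one step of the fixed point iteration: given $\lambda^k$, set $t^k=\lVert\lambda^k\rVert^{1/p-1}$ if $\lambda^k\neq0$ and $t^k=0$ otherwise, and $\lambda^{k+1}=\arg\min_\lambda\{g(\lambda)+\frac{\mu}{2}t^k\lVert\lambda\rVert^2\}$. *)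

theory Defs
  imports "HOL-Analysis.Analysis"
begin

text \<open>Extended-valued convex function g : R^n -> R \<union> {+\<infinity>}, modelled as an
  ereal-valued function that never takes the value -\<infinity>, satisfying the
  convexity inequality with extended arithmetic (0 * \<infinity> = 0).\<close>
definition ext_convex :: "('a::real_vector \<Rightarrow> ereal) \<Rightarrow> bool" where
  "ext_convex g \<longleftrightarrow> (\<forall>x. g x \<noteq> -\<infinity>) \<and>
     (\<forall>x y (t::real). 0 \<le> t \<and> t \<le> 1 \<longrightarrow>
        g ((1 - t) *\<^sub>R x + t *\<^sub>R y) \<le> ereal (1 - t) * g x + ereal t * g y)"

definition is_minimizer :: "('a \<Rightarrow> ereal) \<Rightarrow> 'a \<Rightarrow> bool" where
  "is_minimizer F x \<longleftrightarrow> (\<forall>y. F x \<le> F y)"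

end

theory Submission
  imports Defs
begin

text \<open>If 0 minimizes g plus a multiple of the norm to the power 1 + 1/p, a penalty that is
  superlinear at the origin, then convexity forces 0 to minimize g itself: a strict descent
  direction of g would lower g linearly in the step length s along a segment, while the
  penalty only grows like s powr (1 + 1/p). Once 0 minimizes g, adding the positive definite quadratic penalty of the
  fixed point step leaves 0 as the only minimizer.\<close>

lemma small_powr_bound:
  fixes a d r :: real
  assumes "a \<ge> 0" "d > 0" "r > 0"
  obtains s where "0 < s" "s \<le> 1" "a * s powr r < d"
proof
  define s where "s = min 1 ((d / (a + 1)) powr (1 / r))"
  show s_pos: "0 < s" and "s \<le> 1"
    using assms by (auto simp: s_def)
  have "s powr r \<le> ((d / (a + 1)) powr (1 / r)) powr r"
    using s_pos assms by (intro powr_mono2) (auto simp: s_def)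
  also have "\<dots> = d / (a + 1)"
    using assms by (simp add: powr_powr)
  finally have "a * s powr r \<le> a * (d / (a + 1))"
    using assms(1) by (rule mult_left_mono)
  also have "\<dots> < d"
    using assms by (simp add: field_simps)
  finally show "a * s powr r < d" .
qed

lemma ext_convexD:
  assumes "ext_convex g" "0 \<le> t" "t \<le> 1"
  shows "g ((1 - t) *\<^sub>R x + t *\<^sub>R y) \<le> ereal (1 - t) * g x + ereal t * g y"
  using assms unfolding ext_convex_def by blast

lemma ext_convex_not_MInfty:
  assumes "ext_convex g"
  shows "g x \<noteq> -\<infinity>"
  using assms unfolding ext_convex_def by blast

lemma is_minimizer_finite:
  assumes "is_minimizer (\<lambda>x. g x + ereal (P x)) x0" "g x < \<infinity>"
  shows "g x0 < \<infinity>"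
proof -
  have "g x0 + ereal (P x0) \<le> g x + ereal (P x)"
    using assms(1) unfolding is_minimizer_def by blast
  also have "\<dots> < \<infinity>"
    using assms(2) by simp
  finally show ?thesis
    by (cases "g x0") auto
qed

lemma is_minimizer_drop_superlinear_penalty:
  fixes g :: "'a::real_normed_vector \<Rightarrow> ereal"
  assumes conv: "ext_convex g"
    and fin: "g x0 < \<infinity>"
    and q: "q > 1" and c: "c \<ge> 0"
    and min: "is_minimizer (\<lambda>x. g x + ereal (c * norm (x - x0) powr q)) x0"
  shows "is_minimizer g x0"
  unfolding is_minimizer_def
proof (rule allI, rule ccontr)
  fix y
  assume "\<not> g x0 \<le> g y"
  then have less: "g y < g x0" by simp
  obtain G0 where G0: "g x0 = ereal G0"
    using fin ext_convex_not_MInfty[OF conv] by (cases "g x0") auto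
  obtain Gy where Gy: "g y = ereal Gy"
    using less fin ext_convex_not_MInfty[OF conv] by (cases "g y") auto
  define d where "d = G0 - Gy"
  define a where "a = c * norm (y - x0) powr q"
  have d: "d > 0" using less G0 Gy by (simp add: d_def)
  obtain s where s: "0 < s" "s \<le> 1" and small: "a * s powr (q - 1) < d"
    using small_powr_bound[of a d "q - 1"] c d q by (auto simp: a_def)
  define z where "z = (1 - s) *\<^sub>R x0 + s *\<^sub>R y"
  have "norm (z - x0) = s * norm (y - x0)"
    using s by (simp add: z_def algebra_simps flip: scaleR_diff_right)
  then have penalty: "c * norm (z - x0) powr q = s * (a * s powr (q - 1))"
    using s by (simp add: a_def powr_mult powr_diff)
  have "g x0 \<le> g z + ereal (c * norm (z - x0) powr q)"
    using min unfolding is_minimizer_def by (metis diff_self norm_zero powr_0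
      mult_zero_right add.right_neutral zero_ereal_def)
  then have optimal_at_z: "ereal G0 \<le> g z + ereal (s * (a * s powr (q - 1)))"
    using G0 penalty by simp
  have "g z \<le> ereal (1 - s) * g x0 + ereal s * g y"
    using ext_convexD[OF conv] s unfolding z_def by simp
  then have convex_at_z: "g z \<le> ereal ((1 - s) * G0 + s * Gy)"
    by (simp add: G0 Gy)
  have "ereal G0 \<le> ereal ((1 - s) * G0 + s * Gy) + ereal (s * (a * s powr (q - 1)))"
    using optimal_at_z add_right_mono[OF convex_at_z] by (rule order_trans)
  then have "G0 \<le> (1 - s) * G0 + s * Gy + s * (a * s powr (q - 1))"
    by simp
  then have "s * d \<le> s * (a * s powr (q - 1))"
    by (simp add: d_def algebra_simps)
  with s small show False by simp
qed

lemma is_minimizer_add_positive_penalty: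
  assumes "is_minimizer g x0" "g x0 \<noteq> \<infinity>" "g x0 \<noteq> -\<infinity>"
    and "P x0 = 0" "\<And>x. x \<noteq> x0 \<Longrightarrow> P x > 0"
    and "is_minimizer (\<lambda>x. g x + ereal (P x)) y"
  shows "y = x0"
proof (rule ccontr)
  assume "y \<noteq> x0"
  then have "P y > 0" using assms(5) by blast
  moreover have "g y + ereal (P y) \<le> g x0" and "g x0 \<le> g y"
    using assms(1,4,6) unfolding is_minimizer_def by (metis add.right_neutral zero_ereal_def)+
  ultimately show False
    using assms(2,3) by (cases "g y"; cases "g x0") auto
qed

theorem theorem4p1:
  fixes g :: "real ^ 'n \<Rightarrow> ereal"
    and p \<mu> :: real
    and lk lk1 :: "real ^ 'n"
  assumes p: "p \<ge> 1"
    and mu: "\<mu> > 0"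
    and conv: "ext_convex g"
    and proper: "\<exists>x. g x < \<infinity>"
    and opt: "is_minimizer
                (\<lambda>x. g x + ereal (\<mu> / (1 + 1 / p) * norm x powr (1 + 1 / p))) 0"
    and lk_pos: "norm lk > 0"
    and step: "is_minimizer
                (\<lambda>x. g x + ereal (\<mu> / 2 * (norm lk powr (1 / p - 1)) * (norm x)\<^sup>2)) lk1"
  shows "lk1 = 0"
proof -
  have g0_fin: "g 0 < \<infinity>"
    using proper is_minimizer_finite[OF opt] by blast
  have "is_minimizer g 0"
    using is_minimizer_drop_superlinear_penalty[OF conv g0_fin, of "1 + 1 / p" "\<mu> / (1 + 1 / p)"]
      opt p mu by simp
  moreover have "g 0 \<noteq> -\<infinity>"
    using conv by (rule ext_convex_not_MInfty)
  ultimately show ?thesis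
    using is_minimizer_add_positive_penalty[OF _ _ _ _ _ step] g0_fin lk_pos mu by simp
qed

end
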